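(* Let $P_1$ be the uniform distribution on $J_1=[0,\frac12]$, let $P_2$ be the uniform distribution on $J_2=[\frac12,1]$, and let $P=\frac34P_1+\frac14P_2$. For $n\ge 2$, let $\alpha_n$ be an optimal set of $n$-means for $P$. Then $\alpha_n\cap J_1\neq\emptyset$ and $\alpha_n\cap J_2\neq\emptyset$.
   Context: For a finite set $\alpha\subset\mathbb R$, $V(P;\alpha)=\int\min_{a\in\alpha}(x-a)^2\,dP(x)$; $V_n=\inf\{V(P;\alpha):\mathrm{card}(\alpha)\le n\}$; an optimal set of $n$-means is a set $\alpha$ with $\mathrm{card}(\alpha)\le n$ and $V(P;\alpha)=V_n$. *)

theory Defs
  imports "HOL-Analysis.Analysis"
begin

definition J1 :: "real set" where "J1 = {0..1/2}"
definition J2 :: "real set" where "J2 = {1/2..1}"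

definition P1 :: "real measure" where "P1 = uniform_measure lborel J1"
definition P2 :: "real measure" where "P2 = uniform_measure lborel J2"

definition P :: "real measure" where
  "P = measure_of UNIV (sets borel)
        (\<lambda>A. ennreal (3/4) * emeasure P1 A + ennreal (1/4) * emeasure P2 A)"

definition quant_err :: "real measure \<Rightarrow> real set \<Rightarrow> real" where
  "quant_err Q \<alpha> = (\<integral>x. Min ((\<lambda>a. (x - a)^2) ` \<alpha>) \<partial>Q)"

text \<open>Admissible codebooks: finite nonempty sets with at most n points
  (the empty set gives infinite error and is excluded).\<close>
definition admissible :: "nat \<Rightarrow> real set \<Rightarrow> bool" where
  "admissible n \<alpha> \<longleftrightarrow> finite \<alpha> \<and> \<alpha> \<noteq> {} \<and> card \<alpha> \<le> n"

definition V_n :: "real measure \<Rightarrow> nat \<Rightarrow> real" where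
  "V_n Q n = Inf {quant_err Q \<alpha> | \<alpha>. admissible n \<alpha>}"

definition optimal_n_means :: "real measure \<Rightarrow> nat \<Rightarrow> real set \<Rightarrow> bool" where
  "optimal_n_means Q n \<alpha> \<longleftrightarrow> admissible n \<alpha> \<and> quant_err Q \<alpha> = V_n Q n"

end

theory Submission
  imports Defs
begin

text \<open>
  P has density 3/2 on [0, 1/2] and 1/2 on [1/2, 1], so quantization errors reduce to
  integrals over the two halves. An optimal set has exactly n points, all in [0, 1]: otherwise
  adding a new point of [0, 1], or pulling an outlying point back to [0, 1], strictly lowers the
  error. Replacing a point b by c raises the squared distance at most on the Voronoi cell of b,
  and there by (x - c)^2 - (x - b)^2; if c is the centroid of P on that cell, the error drops by
  (b - c)^2 times the mass of the cell. If the optimal set missed J1, all its points would lie in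
  (1/2, 1], and moving the leftmost one to the mean 3/8 of P helps. If it missed J2, all points
  would lie in [0, 1/2), and the largest one lies strictly left of the centroid of its cell.
\<close>

subsection \<open>The measure P as a density\<close>

definition density_P :: "real \<Rightarrow> real" where
  "density_P x = 3/2 * indicator J1 x + 1/2 * indicator J2 x"

lemma J1_J2_borel [measurable]: "J1 \<in> sets borel" "J2 \<in> sets borel"
  unfolding J1_def J2_def by auto

lemma density_P_measurable [measurable]: "density_P \<in> borel_measurable borel"
  unfolding density_P_def by measurable

lemma emeasure_uniform_measure_half_interval:
  fixes a b :: real
  assumes "b - a = 1/2" "A \<in> sets borel"
  shows "emeasure (uniform_measure lborel {a..b}) A = 2 * emeasure lborel ({a..b} \<inter> A)"
proof -
  have len: "emeasure lborel {a..b} = ennreal (1/2)"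
    using emeasure_lborel_Icc[of a b] assms(1) by (simp only:)
  have "emeasure (uniform_measure lborel {a..b}) A = emeasure lborel ({a..b} \<inter> A) / ennreal (1/2)"
    using emeasure_uniform_measure[of "{a..b}" lborel A] assms(2) by (simp add: len del: ennreal_half)
  also have "\<dots> = 2 * emeasure lborel ({a..b} \<inter> A)"
    unfolding divide_ennreal_def
    by (subst inverse_ennreal) (auto simp: mult.commute simp del: ennreal_half)
  finally show ?thesis .
qed

lemma P_eq_density: "P = density lborel (\<lambda>x. ennreal (density_P x))"
proof -
  let ?D = "density lborel (\<lambda>x. ennreal (density_P x))"
  have "P = measure_of UNIV (sets borel) (emeasure ?D)"
    unfolding P_def
  proof (rule measure_of_eq)
    fix A :: "real set" assume "A \<in> sigma_sets UNIV (sets borel)"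
    then have A [measurable]: "A \<in> sets borel"
      by (simp add: sets.sigma_sets_eq[of borel, simplified])
    have P1: "emeasure P1 A = 2 * emeasure lborel (J1 \<inter> A)"
      unfolding P1_def J1_def by (rule emeasure_uniform_measure_half_interval) auto
    have P2: "emeasure P2 A = 2 * emeasure lborel (J2 \<inter> A)"
      unfolding P2_def J2_def by (rule emeasure_uniform_measure_half_interval) auto
    have "emeasure ?D A = (\<integral>\<^sup>+ x. ennreal (density_P x) * indicator A x \<partial>lborel)"
      by (rule emeasure_density) auto
    also have "\<dots> = (\<integral>\<^sup>+ x. ennreal (3/2) * indicator (J1 \<inter> A) x
                               + ennreal (1/2) * indicator (J2 \<inter> A) x \<partial>lborel)"
      by (intro nn_integral_cong)
         (auto simp: density_P_def indicator_def ennreal_plus[symmetric]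
               simp del: ennreal_plus ennreal_half)
    also have "\<dots> = ennreal (3/2) * emeasure lborel (J1 \<inter> A) + ennreal (1/2) * emeasure lborel (J2 \<inter> A)"
      by (subst nn_integral_add) (auto simp: nn_integral_cmult)
    also have "\<dots> = ennreal (3/4) * emeasure P1 A + ennreal (1/4) * emeasure P2 A"
      by (simp add: P1 P2 mult.assoc[symmetric] ennreal_mult'[symmetric]
                    ennreal_numeral[symmetric] del: ennreal_numeral)
    finally show "ennreal (3/4) * emeasure P1 A + ennreal (1/4) * emeasure P2 A = emeasure ?D A"
      by simp
  qed auto
  also have "\<dots> = ?D"
    using measure_of_of_measure[of ?D] by simp
  finally show ?thesis .
qed

lemma integral_P:
  fixes g :: "real \<Rightarrow> real"
  assumes g: "continuous_on UNIV g"
  shows "(\<integral>x. g x \<partial>P) = 3/2 * integral {0..1/2} g + 1/2 * integral {1/2..1} g"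
proof -
  have [measurable]: "g \<in> borel_measurable borel"
    using g by (simp add: borel_measurable_continuous_onI)
  have halves: "set_integrable lborel {0..1/2} g" "set_integrable lborel {1/2..1} g"
    by (auto intro!: borel_integrable_atLeastAtMost' continuous_on_subset[OF g])
  have "(\<integral>x. g x \<partial>P) = (\<integral>x. density_P x *\<^sub>R g x \<partial>lborel)"
    unfolding P_eq_density by (rule integral_density) (auto simp: density_P_def)
  also have "\<dots> = (\<integral>x. 3/2 * (indicator {0..1/2} x *\<^sub>R g x)
                       + 1/2 * (indicator {1/2..1} x *\<^sub>R g x) \<partial>lborel)"
    by (intro Bochner_Integration.integral_cong)
       (auto simp: density_P_def J1_def J2_def algebra_simps)
  also have "\<dots> = 3/2 * (LINT x : {0..1/2} | lborel. g x) + 1/2 * (LINT x : {1/2..1} | lborel. g x)"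
    using halves unfolding set_integrable_def set_lebesgue_integral_def by simp
  also have "\<dots> = 3/2 * integral {0..1/2} g + 1/2 * integral {1/2..1} g"
    using halves by (simp add: set_borel_integral_eq_integral)
  finally show ?thesis .
qed

lemma integral_nonpos_interval:
  fixes g :: "real \<Rightarrow> real"
  assumes "continuous_on {a..b} g" "\<And>x. x \<in> {a..b} \<Longrightarrow> g x \<le> 0"
  shows "integral {a..b} g \<le> 0"
  using integral_le[of g "{a..b}" "\<lambda>_. 0"] assms integrable_continuous_interval by auto

lemma integral_neg_interval:
  fixes g :: "real \<Rightarrow> real"
  assumes "a < b" and g: "continuous_on {a..b} g" and nonpos: "\<And>x. x \<in> {a..b} \<Longrightarrow> g x \<le> 0"
    and "x\<^sub>0 \<in> {a..b}" "g x\<^sub>0 < 0"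
  shows "integral {a..b} g < 0"
proof -
  have "integral {a..b} g \<noteq> 0"
  proof
    assume "integral {a..b} g = 0"
    then have int0: "((\<lambda>x. - g x) has_integral 0) (cbox a b)"
      using has_integral_neg[OF integrable_integral[OF integrable_continuous_interval[OF g]]]
      by simp
    have "- g x\<^sub>0 = 0"
      by (rule has_integral_0_cbox_imp_0[OF _ _ int0]) (use assms in \<open>auto intro: continuous_intros\<close>)
    with \<open>g x\<^sub>0 < 0\<close> show False by simp
  qed
  with integral_nonpos_interval[OF g nonpos] show ?thesis by simp
qed

lemma integral_affine:
  fixes c\<^sub>0 c\<^sub>1 :: real
  assumes "a \<le> b"
  shows "integral {a..b} (\<lambda>x. c\<^sub>0 + c\<^sub>1 * x) = c\<^sub>0 * (b - a) + c\<^sub>1 * (b^2 - a^2) / 2"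
proof -
  let ?F = "\<lambda>x. c\<^sub>0 * x + c\<^sub>1 * x^2 / 2"
  have "((\<lambda>x. c\<^sub>0 + c\<^sub>1 * x) has_integral (?F b - ?F a)) {a..b}"
    using assms
    by (intro fundamental_theorem_of_calculus)
       (auto intro!: derivative_eq_intros simp: has_real_derivative_iff_has_vector_derivative[symmetric])
  then show ?thesis
    by (simp add: integral_unique field_simps)
qed

lemma sq_dist_le_left_of_midpoint:
  fixes a b x :: real
  assumes "a \<le> b" "x \<le> (a + b) / 2"
  shows "(x - a)^2 \<le> (x - b)^2"
proof -
  have "(x - b)^2 - (x - a)^2 = (b - a) * (a + b - 2 * x)"
    by (simp add: power2_eq_square algebra_simps)
  moreover have "0 \<le> (b - a) * (a + b - 2 * x)"
    using assms by simp
  ultimately show ?thesis by linarith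
qed

lemma sq_dist_le_right_of_midpoint:
  fixes a b x :: real
  assumes "a \<le> b" "(a + b) / 2 \<le> x"
  shows "(x - b)^2 \<le> (x - a)^2"
  using sq_dist_le_left_of_midpoint[of "-b" "-a" "-x"] assms by (simp add: power2_commute)

lemma sq_dist_clamp_le:
  fixes a x :: real
  assumes "x \<in> {0..1}"
  shows "(x - max 0 (min 1 a))^2 \<le> (x - a)^2"
  using assms
  by (cases "a < 0"; cases "1 < a")
     (auto intro: sq_dist_le_left_of_midpoint sq_dist_le_right_of_midpoint)

definition min_sq_dist :: "real set \<Rightarrow> real \<Rightarrow> real" where
  "min_sq_dist A x = Min ((\<lambda>a. (x - a)^2) ` A)"

lemma continuous_on_min_sq_dist:
  assumes "finite A" "A \<noteq> {}"
  shows "continuous_on S (min_sq_dist A)"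
  using assms
proof (induction A rule: finite_ne_induct)
  case (singleton a)
  then show ?case by (simp add: min_sq_dist_def continuous_intros)
next
  case (insert a A)
  have "min_sq_dist (insert a A) = (\<lambda>x. min ((x - a)^2) (min_sq_dist A x))"
    using insert by (auto simp: min_sq_dist_def fun_eq_iff)
  then show ?case using insert by (auto intro!: continuous_intros)
qed

lemma continuous_on_min_sq_dist_diff:
  "finite A \<Longrightarrow> A \<noteq> {} \<Longrightarrow> finite B \<Longrightarrow> B \<noteq> {} \<Longrightarrow>
    continuous_on S (\<lambda>x. min_sq_dist B x - min_sq_dist A x)"
  by (intro continuous_intros continuous_on_min_sq_dist)

lemma min_sq_dist_le: "finite A \<Longrightarrow> a \<in> A \<Longrightarrow> min_sq_dist A x \<le> (x - a)^2"
  unfolding min_sq_dist_def by auto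

lemma min_sq_dist_geI:
  "finite A \<Longrightarrow> A \<noteq> {} \<Longrightarrow> (\<And>a. a \<in> A \<Longrightarrow> c \<le> (x - a)^2) \<Longrightarrow> c \<le> min_sq_dist A x"
  unfolding min_sq_dist_def by auto

lemma min_sq_dist_eq_0: "finite A \<Longrightarrow> x \<in> A \<Longrightarrow> min_sq_dist A x = 0"
  using min_sq_dist_le[of A x x] min_sq_dist_geI[of A 0 x] by fastforce

lemma min_sq_dist_pos: "finite A \<Longrightarrow> A \<noteq> {} \<Longrightarrow> x \<notin> A \<Longrightarrow> 0 < min_sq_dist A x"
  unfolding min_sq_dist_def by auto

lemma min_sq_dist_antimono:
  "finite B \<Longrightarrow> A \<subseteq> B \<Longrightarrow> A \<noteq> {} \<Longrightarrow> min_sq_dist B x \<le> min_sq_dist A x"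
  by (intro min_sq_dist_geI min_sq_dist_le) (auto intro: finite_subset)

definition replace_point :: "real \<Rightarrow> real \<Rightarrow> real set \<Rightarrow> real set" where
  "replace_point b c A = insert c (A - {b})"

lemma finite_replace_point: "finite A \<Longrightarrow> finite (replace_point b c A)"
  unfolding replace_point_def by simp

lemma card_replace_point_le:
  assumes "finite A" "b \<in> A"
  shows "card (replace_point b c A) \<le> card A"
proof -
  have "card (replace_point b c A) \<le> Suc (card (A - {b}))"
    unfolding replace_point_def using assms by (simp add: card_insert_if)
  also have "\<dots> = card A"
    using assms by (rule card_Suc_Diff1)
  finally show ?thesis .
qed

lemma admissible_replace_point:
  "finite A \<Longrightarrow> b \<in> A \<Longrightarrow> admissible (card A) (replace_point b c A)"
  unfolding admissible_def replace_point_def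
  using card_replace_point_le[unfolded replace_point_def] by auto

lemma min_sq_dist_replace_point_cell:
  assumes "finite A" "b \<in> A" "\<And>a. a \<in> A \<Longrightarrow> (x - b)^2 \<le> (x - a)^2"
  shows "min_sq_dist (replace_point b c A) x \<le> min_sq_dist A x + ((x - c)^2 - (x - b)^2)"
proof -
  have "min_sq_dist A x = (x - b)^2"
    using assms by (intro antisym min_sq_dist_le min_sq_dist_geI) auto
  moreover have "min_sq_dist (replace_point b c A) x \<le> (x - c)^2"
    using assms by (intro min_sq_dist_le finite_replace_point) (auto simp: replace_point_def)
  ultimately show ?thesis by simp
qed

lemma min_sq_dist_replace_point_off_cell:
  assumes "finite A" "a \<in> A" "a \<noteq> b" "(x - a)^2 \<le> (x - b)^2"
  shows "min_sq_dist (replace_point b c A) x \<le> min_sq_dist A x"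
proof (rule min_sq_dist_geI)
  fix a' assume "a' \<in> A"
  have "min_sq_dist (replace_point b c A) x \<le> (x - a)^2" if "a \<in> A - {b}" for a
    using assms that by (intro min_sq_dist_le finite_replace_point) (auto simp: replace_point_def)
  then show "min_sq_dist (replace_point b c A) x \<le> (x - a')^2"
    using assms \<open>a' \<in> A\<close> by (cases "a' = b") fastforce+
qed (use assms in auto)

lemma min_sq_dist_replace_point_le:
  assumes "finite A" "b \<in> A"
  shows "min_sq_dist (replace_point b c A) x \<le> min_sq_dist A x + max 0 ((x - c)^2 - (x - b)^2)"
proof (cases "\<forall>a \<in> A. (x - b)^2 \<le> (x - a)^2")
  case True
  then show ?thesis
    using min_sq_dist_replace_point_cell[OF assms, of x c] by auto
next
  case False
  then obtain a where "a \<in> A" "a \<noteq> b" "(x - a)^2 \<le> (x - b)^2"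
    by (metis linorder_le_cases)
  then have "min_sq_dist (replace_point b c A) x \<le> min_sq_dist A x"
    by (intro min_sq_dist_replace_point_off_cell[OF assms(1)])
  then show ?thesis
    using max.cobounded1[of 0 "(x - c)^2 - (x - b)^2"] by linarith
qed

lemma quant_err_P_diff:
  assumes "finite A" "A \<noteq> {}" "finite B" "B \<noteq> {}"
  shows "quant_err P B - quant_err P A =
           3/2 * integral {0..1/2} (\<lambda>x. min_sq_dist B x - min_sq_dist A x)
         + 1/2 * integral {1/2..1} (\<lambda>x. min_sq_dist B x - min_sq_dist A x)"
proof -
  have "quant_err P C = 3/2 * integral {0..1/2} (min_sq_dist C) + 1/2 * integral {1/2..1} (min_sq_dist C)"
    if "finite C" "C \<noteq> {}" for C
    using integral_P[OF continuous_on_min_sq_dist[OF that]]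
    by (simp add: quant_err_def min_sq_dist_def)
  moreover have "min_sq_dist C integrable_on {a..b}" if "finite C" "C \<noteq> {}" for C and a b :: real
    by (intro integrable_continuous_interval continuous_on_min_sq_dist that)
  ultimately show ?thesis
    using assms by (simp add: integral_diff algebra_simps)
qed

lemma quant_err_P_mono:
  assumes "finite A" "A \<noteq> {}" "finite B" "B \<noteq> {}"
    and le: "\<And>x. x \<in> {0..1} \<Longrightarrow> min_sq_dist B x \<le> min_sq_dist A x"
  shows "quant_err P B \<le> quant_err P A"
proof -
  have nonpos: "integral {a..b} (\<lambda>x. min_sq_dist B x - min_sq_dist A x) \<le> 0"
    if "0 \<le> a" "b \<le> 1" for a b :: real
    using le that by (intro integral_nonpos_interval continuous_on_min_sq_dist_diff assms) auto
  show ?thesis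
    using quant_err_P_diff[OF assms(1-4)] nonpos[of 0 "1/2"] nonpos[of "1/2" 1] by simp
qed

lemma quant_err_P_strict_mono:
  assumes A: "finite A" "A \<noteq> {}" and B: "finite B" "B \<noteq> {}"
    and le: "\<And>x. x \<in> {0..1} \<Longrightarrow> min_sq_dist B x \<le> min_sq_dist A x"
    and "x\<^sub>0 \<in> {0..1}" "min_sq_dist B x\<^sub>0 < min_sq_dist A x\<^sub>0"
  shows "quant_err P B < quant_err P A"
proof -
  let ?D = "\<lambda>x. min_sq_dist B x - min_sq_dist A x"
  have nonpos: "integral {a..b} ?D \<le> 0" if "0 \<le> a" "b \<le> 1" for a b :: real
    using le that by (intro integral_nonpos_interval continuous_on_min_sq_dist_diff A B) auto
  have neg: "integral {a..b} ?D < 0" if "0 \<le> a" "a < b" "b \<le> 1" "x\<^sub>0 \<in> {a..b}" for a b :: real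
    using le that assms(6,7)
    by (intro integral_neg_interval[where x\<^sub>0 = x\<^sub>0] continuous_on_min_sq_dist_diff A B) auto
  have "integral {0..1/2} ?D < 0 \<or> integral {1/2..1} ?D < 0"
    using neg[of 0 "1/2"] neg[of "1/2" 1] \<open>x\<^sub>0 \<in> {0..1}\<close> by force
  then show ?thesis
    using quant_err_P_diff[OF A B] nonpos[of 0 "1/2"] nonpos[of "1/2" 1] by auto
qed

subsection \<open>Moving a point to the centroid of its cell\<close>

text \<open>For 0 \<le> h \<le> 1/2 the set {h..1} has P-mass 1 - 3/2 h and first moment 3/8 - 3/4 h^2,
  so tail_mean h is the centroid of P restricted to {h..1}.\<close>

definition tail_mean :: "real \<Rightarrow> real" where
  "tail_mean h = (3/8 - 3/4 * h^2) / (1 - 3/2 * h)"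

lemma integral_P_affine_tail:
  fixes c\<^sub>0 c\<^sub>1 :: real
  assumes "0 \<le> h" "h \<le> 1/2"
  shows "3/2 * integral {h..1/2} (\<lambda>x. c\<^sub>0 + c\<^sub>1 * x) + 1/2 * integral {1/2..1} (\<lambda>x. c\<^sub>0 + c\<^sub>1 * x)
         = c\<^sub>0 * (1 - 3/2 * h) + c\<^sub>1 * (3/8 - 3/4 * h^2)"
  using assms integral_affine[of h "1/2" c\<^sub>0 c\<^sub>1] integral_affine[of "1/2" 1 c\<^sub>0 c\<^sub>1]
  by (simp add: power2_eq_square field_simps)

lemma quant_err_P_move_to_tail_mean:
  assumes A: "finite A" "A \<noteq> {}" and B: "finite B" "B \<noteq> {}" and h: "0 \<le> h" "h \<le> 1/2"
    and head: "\<And>x. 0 \<le> x \<Longrightarrow> x \<le> h \<Longrightarrow> min_sq_dist B x \<le> min_sq_dist A x"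
    and tail: "\<And>x. h \<le> x \<Longrightarrow> x \<le> 1 \<Longrightarrow>
                 min_sq_dist B x \<le> min_sq_dist A x + ((x - tail_mean h)^2 - (x - b)^2)"
    and "b \<noteq> tail_mean h"
  shows "quant_err P B < quant_err P A"
proof -
  define c where "c = tail_mean h"
  define M where "M = 1 - 3/2 * h"
  have "M > 0" using h by (simp add: M_def)
  then have cM: "c * M = 3/8 - 3/4 * h^2" by (simp add: c_def M_def tail_mean_def)
  let ?D = "\<lambda>x. min_sq_dist B x - min_sq_dist A x"
  let ?L = "\<lambda>x. (c^2 - b^2) + 2 * (b - c) * x"
  have L: "(x - c)^2 - (x - b)^2 = ?L x" for x
    by (simp add: power2_eq_square algebra_simps)
  have tail_L: "?D x \<le> ?L x" if "h \<le> x" "x \<le> 1" for x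
    using tail[OF that] unfolding c_def[symmetric] L by simp
  have D: "continuous_on S ?D" for S
    by (rule continuous_on_min_sq_dist_diff[OF A B])
  have "integral {0..1/2} ?D = integral {0..h} ?D + integral {h..1/2} ?D"
    using h by (intro Henstock_Kurzweil_Integration.integral_combine[symmetric] integrable_continuous_interval D) auto
  moreover have "integral {0..h} ?D \<le> 0"
    using head by (intro integral_nonpos_interval D) auto
  moreover have "integral {h..1/2} ?D \<le> integral {h..1/2} ?L"
    using tail_L h by (intro integral_le integrable_continuous_interval D continuous_intros) auto
  moreover have "integral {1/2..1} ?D \<le> integral {1/2..1} ?L"
    using tail_L h by (intro integral_le integrable_continuous_interval D continuous_intros) auto
  moreover have "3/2 * integral {h..1/2} ?L + 1/2 * integral {1/2..1} ?L
                  = (c^2 - b^2) * M + 2 * (b - c) * (c * M)"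
    unfolding integral_P_affine_tail[OF h] cM M_def[symmetric] ..
  moreover have "\<dots> = - M * (b - c)^2"
    by (simp add: power2_eq_square algebra_simps)
  moreover have "M * (b - c)^2 > 0"
    using \<open>M > 0\<close> \<open>b \<noteq> tail_mean h\<close> by (simp add: c_def)
  ultimately show ?thesis
    using quant_err_P_diff[OF A B] by linarith
qed

lemma quant_err_P_replace_Min:
  assumes "finite A" "A \<noteq> {}" "\<forall>a \<in> A. 3/8 < a"
  shows "quant_err P (replace_point (Min A) (3/8) A) < quant_err P A"
proof -
  define b where "b = Min A"
  have "b \<in> A" "3/8 < b" and b_le: "\<And>a. a \<in> A \<Longrightarrow> b \<le> a"
    using assms by (auto simp: b_def)
  have bound: "min_sq_dist (replace_point b (3/8) A) x
                 \<le> min_sq_dist A x + ((x - 3/8)^2 - (x - b)^2)" for x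
  proof (cases "x \<le> b")
    case True
    have "(x - b)^2 \<le> (x - a)^2" if "a \<in> A" for a
      using b_le[OF that] True by (intro sq_dist_le_left_of_midpoint) auto
    then show ?thesis
      by (rule min_sq_dist_replace_point_cell[OF assms(1) \<open>b \<in> A\<close>])
  next
    case False
    have "(x - 3/8)^2 - (x - b)^2 = (b - 3/8) * (2 * x - b - 3/8)"
      by (simp add: power2_eq_square algebra_simps)
    also have "\<dots> \<ge> 0"
      using False \<open>3/8 < b\<close> by simp
    finally show ?thesis
      using min_sq_dist_replace_point_le[OF assms(1) \<open>b \<in> A\<close>, where x = x and c = "3/8"] by simp
  qed
  have "(3/8)^2 < b^2"
    using \<open>3/8 < b\<close> by (intro power_strict_mono) auto
  then have "(0 - 3/8)^2 - (0 - b)^2 < (0::real)"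
    by simp
  then have head: "min_sq_dist (replace_point b (3/8) A) 0 \<le> min_sq_dist A 0"
    using bound[of 0] by linarith
  show ?thesis
    unfolding b_def[symmetric]
    by (rule quant_err_P_move_to_tail_mean[where h = 0 and b = b])
       (use assms bound head \<open>3/8 < b\<close>
         in \<open>auto simp: tail_mean_def finite_replace_point replace_point_def\<close>)
qed

lemma below_tail_mean_midpoint:
  fixes p b :: real
  assumes "0 \<le> p" "p < b" "b < 1/2"
  shows "b < tail_mean ((p + b) / 2)"
proof -
  define h where "h = (p + b) / 2"
  have M: "1 - 3/2 * h > 0" using assms by (simp add: h_def)
  have "b * (1 - 3/2 * h) < 3/8 - 3/4 * h^2"
  proof (cases "h \<le> 1/4")
    case True
    have "b \<le> 2 * h" using assms by (simp add: h_def)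
    then have "b * (1 - 3/2 * h) \<le> 2 * h * (1 - 3/2 * h)"
      using M by (intro mult_right_mono) auto
    moreover have "(7/36) * (7/36) \<le> (4/9 - h) * (4/9 - h)"
      using True by (intro mult_mono) auto
    ultimately show ?thesis by (simp add: power2_eq_square algebra_simps)
  next
    case False
    have "b * (1 - 3/2 * h) < 1/2 * (1 - 3/2 * h)"
      using M assms by (intro mult_strict_right_mono) auto
    moreover have "(h - 1/4) * (h - 1/2) \<le> 0"
      using False assms by (intro mult_nonneg_nonpos) (auto simp: h_def)
    ultimately show ?thesis
      using False by (simp add: power2_eq_square algebra_simps)
  qed
  with M show ?thesis
    by (simp add: tail_mean_def h_def pos_less_divide_eq)
qed

lemma quant_err_P_replace_Max:
  assumes A: "finite A" "\<forall>a \<in> A. 0 \<le> a \<and> a < 1/2" "2 \<le> card A"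
  shows "\<exists>B. admissible (card A) B \<and> quant_err P B < quant_err P A"
proof -
  define b where "b = Max A"
  define p where "p = Max (A - {b})"
  define h where "h = (p + b) / 2"
  define B where "B = replace_point b (tail_mean h) A"
  have "A \<noteq> {}" using A(3) by auto
  then have "b \<in> A" and b_ge: "\<And>a. a \<in> A \<Longrightarrow> a \<le> b"
    using A(1) by (auto simp: b_def)
  have "A - {b} \<noteq> {}"
    using A(3) card_le_Suc0_iff_eq[OF A(1)] \<open>b \<in> A\<close> by auto
  then have "p \<in> A - {b}"
    unfolding p_def using A(1) by (intro Max_in) auto
  have p_ge: "\<And>a. a \<in> A - {b} \<Longrightarrow> a \<le> p"
    unfolding p_def using A(1) by simp
  have pb: "0 \<le> p" "p < b" "b < 1/2"
    using \<open>p \<in> A - {b}\<close> b_ge[of p] A(2) \<open>b \<in> A\<close> by force+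
  have head: "min_sq_dist B x \<le> min_sq_dist A x" if "x \<le> h" for x
    unfolding B_def
    using \<open>p \<in> A - {b}\<close> that pb
    by (intro min_sq_dist_replace_point_off_cell[OF A(1), of p] sq_dist_le_left_of_midpoint)
       (auto simp: h_def)
  have tail: "min_sq_dist B x \<le> min_sq_dist A x + ((x - tail_mean h)^2 - (x - b)^2)"
    if "h \<le> x" for x
    unfolding B_def
  proof (rule min_sq_dist_replace_point_cell[OF A(1) \<open>b \<in> A\<close>])
    fix a assume "a \<in> A"
    show "(x - b)^2 \<le> (x - a)^2"
    proof (cases "a = b")
      case False
      then have "a \<le> p" using p_ge \<open>a \<in> A\<close> by auto
      then show ?thesis
        using that pb by (intro sq_dist_le_right_of_midpoint) (auto simp: h_def)
    qed simp
  qed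
  have "quant_err P B < quant_err P A"
    by (rule quant_err_P_move_to_tail_mean[where h = h and b = b])
       (use A \<open>A \<noteq> {}\<close> head tail pb below_tail_mean_midpoint[OF pb]
         in \<open>auto simp: B_def h_def finite_replace_point replace_point_def\<close>)
  then show ?thesis
    using admissible_replace_point[OF A(1) \<open>b \<in> A\<close>] by (auto simp: B_def)
qed

lemma quant_err_nonneg: "finite A \<Longrightarrow> A \<noteq> {} \<Longrightarrow> 0 \<le> quant_err Q A"
  unfolding quant_err_def by (intro Bochner_Integration.integral_nonneg) auto

lemma V_n_le_quant_err: "admissible n B \<Longrightarrow> V_n Q n \<le> quant_err Q B"
  unfolding V_n_def
  by (rule cInf_lower) (auto intro!: bdd_belowI[of _ 0] quant_err_nonneg simp: admissible_def)

lemma optimal_n_means_le: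
  "optimal_n_means Q n \<alpha> \<Longrightarrow> admissible n B \<Longrightarrow> quant_err Q \<alpha> \<le> quant_err Q B"
  unfolding optimal_n_means_def using V_n_le_quant_err by simp

lemma optimal_n_means_if_le:
  "optimal_n_means Q n \<alpha> \<Longrightarrow> admissible n B \<Longrightarrow> quant_err Q B \<le> quant_err Q \<alpha> \<Longrightarrow>
    optimal_n_means Q n B"
  unfolding optimal_n_means_def using V_n_le_quant_err[of n B Q] by simp

lemma optimal_n_means_P_card:
  assumes opt: "optimal_n_means P n \<alpha>"
  shows "card \<alpha> = n"
proof (rule ccontr)
  assume "card \<alpha> \<noteq> n"
  then have \<alpha>: "finite \<alpha>" "\<alpha> \<noteq> {}" "card \<alpha> < n"
    using opt by (auto simp: optimal_n_means_def admissible_def)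
  have "\<not> {0..1::real} \<subseteq> \<alpha>"
    by (metis \<alpha>(1) finite_subset infinite_Icc zero_less_one)
  then obtain x\<^sub>0 where x\<^sub>0: "x\<^sub>0 \<in> {0..1}" "x\<^sub>0 \<notin> \<alpha>"
    by blast
  have "admissible n (insert x\<^sub>0 \<alpha>)"
    using \<alpha> by (simp add: admissible_def card_insert_if)
  moreover have "quant_err P (insert x\<^sub>0 \<alpha>) < quant_err P \<alpha>"
    using \<alpha> x\<^sub>0
    by (intro quant_err_P_strict_mono[where x\<^sub>0 = x\<^sub>0] min_sq_dist_antimono)
       (auto simp: min_sq_dist_eq_0 min_sq_dist_pos)
  ultimately show False
    using optimal_n_means_le[OF opt] by fastforce
qed

lemma optimal_n_means_P_subset:
  assumes opt: "optimal_n_means P n \<alpha>"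
  shows "\<alpha> \<subseteq> {0..1}"
proof
  fix a assume "a \<in> \<alpha>"
  have \<alpha>: "finite \<alpha>" "\<alpha> \<noteq> {}" "card \<alpha> = n"
    using opt optimal_n_means_P_card[OF opt] by (auto simp: optimal_n_means_def admissible_def)
  show "a \<in> {0..1}"
  proof (rule ccontr)
    assume "a \<notin> {0..1}"
    define c :: real where "c = max 0 (min 1 a)"
    define B where "B = replace_point a c \<alpha>"
    have "c \<in> {0..1}" "c \<noteq> a"
      using \<open>a \<notin> {0..1}\<close> by (auto simp: c_def)
    have le: "min_sq_dist B x \<le> min_sq_dist \<alpha> x" if "x \<in> {0..1}" for x
      using min_sq_dist_replace_point_le[OF \<alpha>(1) \<open>a \<in> \<alpha>\<close>, where x = x and c = c]
        sq_dist_clamp_le[OF that, of a]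
      by (simp add: B_def c_def)
    have B: "finite B" "B \<noteq> {}" "admissible n B"
      using admissible_replace_point[OF \<alpha>(1) \<open>a \<in> \<alpha>\<close>, of c] \<alpha>(1,3)
      by (auto simp: B_def replace_point_def)
    show False
    proof (cases "c \<in> \<alpha>")
      case True
      then have "B = \<alpha> - {a}"
        using \<open>c \<noteq> a\<close> by (auto simp: B_def replace_point_def)
      then have "card B < n"
        using card_Diff1_less[OF \<alpha>(1) \<open>a \<in> \<alpha>\<close>] \<alpha>(3) by (simp only:)
      moreover have "optimal_n_means P n B"
        using le by (intro optimal_n_means_if_le[OF opt B(3)] quant_err_P_mono \<alpha>(1,2) B(1,2))
      ultimately show False
        using optimal_n_means_P_card by fastforce
    next
      case False
      have "quant_err P B < quant_err P \<alpha>"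
        using le \<open>c \<in> {0..1}\<close> False \<alpha>
        by (intro quant_err_P_strict_mono[where x\<^sub>0 = c] \<alpha>(1,2) B(1,2))
           (auto simp: B_def replace_point_def min_sq_dist_eq_0 min_sq_dist_pos finite_replace_point)
      then show False
        using optimal_n_means_le[OF opt B(3)] by simp
    qed
  qed
qed

theorem proposition4p3:
  fixes n :: nat and \<alpha> :: "real set"
  assumes "n \<ge> 2" and "optimal_n_means P n \<alpha>"
  shows "\<alpha> \<inter> J1 \<noteq> {} \<and> \<alpha> \<inter> J2 \<noteq> {}"
proof -
  have \<alpha>: "finite \<alpha>" "\<alpha> \<noteq> {}" "card \<alpha> = n" "\<alpha> \<subseteq> {0..1}"
    using assms(2) optimal_n_means_P_card[OF assms(2)] optimal_n_means_P_subset[OF assms(2)]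
    by (simp_all add: optimal_n_means_def admissible_def)
  have no_better: "\<not> (admissible n B \<and> quant_err P B < quant_err P \<alpha>)" for B
    using optimal_n_means_le[OF assms(2)] by fastforce
  have "\<alpha> \<inter> J1 \<noteq> {}"
  proof
    assume "\<alpha> \<inter> J1 = {}"
    then have "\<forall>a \<in> \<alpha>. 3/8 < a"
      using \<alpha>(4) by (force simp: J1_def)
    then show False
      using quant_err_P_replace_Min[OF \<alpha>(1,2)] admissible_replace_point[OF \<alpha>(1) Min_in[OF \<alpha>(1,2)]]
        no_better \<alpha>(3) by blast
  qed
  moreover have "\<alpha> \<inter> J2 \<noteq> {}"
  proof
    assume "\<alpha> \<inter> J2 = {}"
    then have "\<forall>a \<in> \<alpha>. 0 \<le> a \<and> a < 1/2"
      using \<alpha>(4) by (force simp: J2_def)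
    then show False
      using quant_err_P_replace_Max[OF \<alpha>(1)] assms(1) no_better \<alpha>(3) by blast
  qed
  ultimately show ?thesis by blast
qed

end
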